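(* Let $M\preceq\mathbb{C}$ be small, $C\supseteq M$ full, and suppose $\langle A,B\rangle$ is an $M$-f.s. sequence over $C$. Let $B=B_1\sqcup B_2$ be any partition of $B$. Then $\langle A,B_1,B_2\rangle$ is an $M$-f.s. sequence over $C$ if and only if $\langle B_1,B_2\rangle$ is an $M$-f.s. sequence over $C$.
   Context: Work in a monster model $\mathbb{C}$ of an arbitrary complete theory. For $D\supseteq M$, $\mathrm{tp}(X/D)$ is finitely satisfied in $M$ if each of its formulas is satisfied by a tuple from $M$. $C\supseteq M$ is full if every type in $S_n(M)$, for every $n$, is realized in $C$. An $M$-f.s. sequence over $C$ is a sequence of sets $\langle A_i:i\in I\rangle$ with $\mathrm{tp}(A_i/A_{<i}C)$ finitely satisfied in $M$ for every $i$, where $A_{<i}=\bigcup_{j<i}A_j$. *)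

theory Defs
  imports Main
begin

datatype 'f trm = Var nat | Fn 'f "'f trm list"

datatype ('f, 'r) fm =
    Eq "'f trm" "'f trm"
  | Rel 'r "'f trm list"
  | Neg "('f, 'r) fm"
  | Conj "('f, 'r) fm" "('f, 'r) fm"
  | Ex nat "('f, 'r) fm"

record ('a, 'f, 'r) struc =
  funs :: "'f \<Rightarrow> 'a list \<Rightarrow> 'a"
  rels :: "'r \<Rightarrow> 'a list \<Rightarrow> bool"

fun evalt :: "('a, 'f, 'r) struc \<Rightarrow> (nat \<Rightarrow> 'a) \<Rightarrow> 'f trm \<Rightarrow> 'a" where
  "evalt S e (Var v) = e v"
| "evalt S e (Fn f ts) = funs S f (map (evalt S e) ts)"

fun fvt :: "'f trm \<Rightarrow> nat set" where
  "fvt (Var v) = {v}"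
| "fvt (Fn f ts) = \<Union> (set (map fvt ts))"

fun fv :: "('f, 'r) fm \<Rightarrow> nat set" where
  "fv (Eq s t) = fvt s \<union> fvt t"
| "fv (Rel r ts) = \<Union> (set (map fvt ts))"
| "fv (Neg \<phi>) = fv \<phi>"
| "fv (Conj \<phi> \<psi>) = fv \<phi> \<union> fv \<psi>"
| "fv (Ex x \<phi>) = fv \<phi> - {x}"

fun sat_in :: "'a set \<Rightarrow> ('a, 'f, 'r) struc \<Rightarrow> ('f, 'r) fm \<Rightarrow> (nat \<Rightarrow> 'a) \<Rightarrow> bool" where
  "sat_in U S (Eq s t) e = (evalt S e s = evalt S e t)"
| "sat_in U S (Rel r ts) e = rels S r (map (evalt S e) ts)"
| "sat_in U S (Neg \<phi>) e = (\<not> sat_in U S \<phi> e)"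
| "sat_in U S (Conj \<phi> \<psi>) e = (sat_in U S \<phi> e \<and> sat_in U S \<psi> e)"
| "sat_in U S (Ex x \<phi>) e = (\<exists>a\<in>U. sat_in U S \<phi> (e(x := a)))"

text \<open>Satisfaction in the whole structure (the monster model has universe UNIV).\<close>
abbreviation sat :: "('a, 'f, 'r) struc \<Rightarrow> ('f, 'r) fm \<Rightarrow> (nat \<Rightarrow> 'a) \<Rightarrow> bool" where
  "sat S \<equiv> sat_in UNIV S"

definition elementary_sub :: "('a, 'f, 'r) struc \<Rightarrow> 'a set \<Rightarrow> bool" where
  "elementary_sub S M \<longleftrightarrow> M \<noteq> {}
     \<and> (\<forall>f xs. set xs \<subseteq> M \<longrightarrow> funs S f xs \<in> M)
     \<and> (\<forall>\<phi> e. range e \<subseteq> M \<longrightarrow> (sat_in M S \<phi> e \<longleftrightarrow> sat S \<phi> e))"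

text \<open>"small" = of cardinality strictly below the saturation cardinal kappa = |K|.\<close>
definition small :: "'k set \<Rightarrow> 'a set \<Rightarrow> bool" where
  "small K X \<longleftrightarrow> (card_of X, card_of K) \<in> ordLess"

definition saturated :: "('a, 'f, 'r) struc \<Rightarrow> 'k set \<Rightarrow> bool" where
  "saturated S K \<longleftrightarrow> (\<forall>P \<Sigma>. small K P
     \<longrightarrow> (\<forall>(\<phi>, e) \<in> \<Sigma>. \<forall>v \<in> fv \<phi> - {0}. e v \<in> P)
     \<longrightarrow> (\<forall>F \<subseteq> \<Sigma>. finite F \<longrightarrow> (\<exists>a. \<forall>(\<phi>, e) \<in> F. sat S \<phi> (e(0 := a))))
     \<longrightarrow> (\<exists>a. \<forall>(\<phi>, e) \<in> \<Sigma>. sat S \<phi> (e(0 := a))))"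

definition elem_map :: "('a, 'f, 'r) struc \<Rightarrow> 'a set \<Rightarrow> ('a \<Rightarrow> 'a) \<Rightarrow> bool" where
  "elem_map S D f \<longleftrightarrow> (\<forall>\<phi> e. (\<forall>v \<in> fv \<phi>. e v \<in> D) \<longrightarrow> (sat S \<phi> e \<longleftrightarrow> sat S \<phi> (f \<circ> e)))"

definition automorphism :: "('a, 'f, 'r) struc \<Rightarrow> ('a \<Rightarrow> 'a) \<Rightarrow> bool" where
  "automorphism S g \<longleftrightarrow> bij g
     \<and> (\<forall>f xs. g (funs S f xs) = funs S f (map g xs))
     \<and> (\<forall>r xs. rels S r xs \<longleftrightarrow> rels S r (map g xs))"

definition strongly_homogeneous :: "('a, 'f, 'r) struc \<Rightarrow> 'k set \<Rightarrow> bool" where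
  "strongly_homogeneous S K \<longleftrightarrow> (\<forall>D f. small K D \<longrightarrow> elem_map S D f
     \<longrightarrow> (\<exists>g. automorphism S g \<and> (\<forall>x \<in> D. g x = f x)))"

text \<open>A monster model: kappa-saturated and strongly kappa-homogeneous, kappa > |L| + aleph_0.\<close>
definition monster :: "('a, 'f, 'r) struc \<Rightarrow> 'k set \<Rightarrow> bool" where
  "monster S K \<longleftrightarrow> (card_of (UNIV :: ('f, 'r) fm set), card_of K) \<in> ordLess
     \<and> saturated S K \<and> strongly_homogeneous S K"

text \<open>Formulas over M in the variables 0..n-1: pairs (phi, e) with parameters e v in M for v >= n.\<close>
definition over :: "'a set \<Rightarrow> nat \<Rightarrow> (('f, 'r) fm \<times> (nat \<Rightarrow> 'a)) set" where
  "over M n = {(\<phi>, e). \<forall>v. n \<le> v \<longrightarrow> e v \<in> M}"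

definition realizes :: "('a, 'f, 'r) struc \<Rightarrow> nat \<Rightarrow> (nat \<Rightarrow> 'a) \<Rightarrow> (('f, 'r) fm \<times> (nat \<Rightarrow> 'a)) set \<Rightarrow> bool" where
  "realizes S n a p \<longleftrightarrow> (\<forall>(\<phi>, e) \<in> p. sat S \<phi> (\<lambda>v. if v < n then a v else e v))"

text \<open>p in S_n(M): a complete set of formulas over M consistent with the elementary diagram.\<close>
definition complete_type :: "('a, 'f, 'r) struc \<Rightarrow> 'a set \<Rightarrow> nat \<Rightarrow> (('f, 'r) fm \<times> (nat \<Rightarrow> 'a)) set \<Rightarrow> bool" where
  "complete_type S M n p \<longleftrightarrow> p \<subseteq> over M n
     \<and> (\<forall>(\<phi>, e) \<in> over M n. (\<phi>, e) \<in> p \<or> (Neg \<phi>, e) \<in> p)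
     \<and> (\<forall>F \<subseteq> p. finite F \<longrightarrow> (\<exists>a. realizes S n a F))"

definition full :: "('a, 'f, 'r) struc \<Rightarrow> 'a set \<Rightarrow> 'a set \<Rightarrow> bool" where
  "full S M C \<longleftrightarrow> M \<subseteq> C \<and> (\<forall>n p. complete_type S M n p
     \<longrightarrow> (\<exists>c. (\<forall>i < n. c i \<in> C) \<and> realizes S n c p))"

text \<open>tp(X/D) is finitely satisfied in M: whenever sat phi e with the variables in V assigned
  elements of X and the remaining free variables assigned elements of D, the X-part can be
  replaced by elements of M.\<close>
definition fin_sat :: "('a, 'f, 'r) struc \<Rightarrow> 'a set \<Rightarrow> 'a set \<Rightarrow> 'a set \<Rightarrow> bool" where
  "fin_sat S M X D \<longleftrightarrow> (\<forall>\<phi> e V. (\<forall>v \<in> V. e v \<in> X) \<longrightarrow> (\<forall>v \<in> fv \<phi> - V. e v \<in> D)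
     \<longrightarrow> sat S \<phi> e
     \<longrightarrow> (\<exists>e'. (\<forall>v \<in> V. e' v \<in> M) \<and> (\<forall>v. v \<notin> V \<longrightarrow> e' v = e v) \<and> sat S \<phi> e'))"

definition fs_seq :: "('a, 'f, 'r) struc \<Rightarrow> 'a set \<Rightarrow> 'a set \<Rightarrow> 'a set list \<Rightarrow> bool" where
  "fs_seq S M C As \<longleftrightarrow> (\<forall>i < length As. fin_sat S M (As ! i) (\<Union> (set (take i As)) \<union> C))"

end

theory Submission
  imports Defs "HOL-Library.Infinite_Set"
begin

text \<open>
  Only the direction from \<open>\<langle>B\<^sub>1, B\<^sub>2\<rangle>\<close> to \<open>\<langle>A, B\<^sub>1, B\<^sub>2\<rangle>\<close> needs an argument, namely that
  \<open>tp(B\<^sub>2/A B\<^sub>1 C)\<close> is finitely satisfied in \<open>M\<close>. A type over \<open>D \<supseteq> M\<close> that is finitely satisfied in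
  \<open>M\<close> is \<open>M\<close>-invariant: tuples of \<open>D\<close> with the same type over \<open>M\<close> cannot be told apart by a
  formula with parameters from the realising set. Given \<open>\<phi>(b\<^sub>2, b\<^sub>1, d)\<close> with \<open>d\<close> from \<open>A C\<close>, fullness of
  \<open>C\<close> yields \<open>c \<in> C\<close> with \<open>c \<equiv>\<^sub>M d\<close>; invariance of \<open>tp(B/A C)\<close> gives \<open>\<phi>(b\<^sub>2, b\<^sub>1, c)\<close>, finite
  satisfiability of \<open>tp(B\<^sub>2/B\<^sub>1 C)\<close> gives \<open>\<phi>(m, b\<^sub>1, c)\<close> with \<open>m\<close> from \<open>M\<close>, and invariance once more
  gives \<open>\<phi>(m, b\<^sub>1, d)\<close>.
\<close>

fun rename_trm :: "(nat \<Rightarrow> nat) \<Rightarrow> 'f trm \<Rightarrow> 'f trm" where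
  "rename_trm \<rho> (Var v) = Var (\<rho> v)"
| "rename_trm \<rho> (Fn f ts) = Fn f (map (rename_trm \<rho>) ts)"

fun rename_fm :: "(nat \<Rightarrow> nat) \<Rightarrow> ('f, 'r) fm \<Rightarrow> ('f, 'r) fm" where
  "rename_fm \<rho> (Eq s t) = Eq (rename_trm \<rho> s) (rename_trm \<rho> t)"
| "rename_fm \<rho> (Rel r ts) = Rel r (map (rename_trm \<rho>) ts)"
| "rename_fm \<rho> (Neg \<phi>) = Neg (rename_fm \<rho> \<phi>)"
| "rename_fm \<rho> (Conj \<phi> \<psi>) = Conj (rename_fm \<rho> \<phi>) (rename_fm \<rho> \<psi>)"
| "rename_fm \<rho> (Ex x \<phi>) = Ex (\<rho> x) (rename_fm \<rho> \<phi>)"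

lemma evalt_rename_trm: "evalt S e (rename_trm \<rho> t) = evalt S (e \<circ> \<rho>) t"
  by (induction t) (auto cong: map_cong)

lemma fvt_rename_trm: "fvt (rename_trm \<rho> t) = \<rho> ` fvt t"
  by (induction t) auto

lemma sat_in_rename_fm:
  assumes "inj \<rho>"
  shows "sat_in U S (rename_fm \<rho> \<phi>) e \<longleftrightarrow> sat_in U S \<phi> (e \<circ> \<rho>)"
proof (induction \<phi> arbitrary: e)
  case (Ex x \<phi>)
  have "\<And>a. (e(\<rho> x := a)) \<circ> \<rho> = (e \<circ> \<rho>)(x := a)"
    using assms by (auto simp: fun_eq_iff inj_eq)
  then show ?case
    by (simp only: rename_fm.simps sat_in.simps Ex.IH)
qed (auto simp: evalt_rename_trm comp_def)

lemma fv_rename_fm: "inj \<rho> \<Longrightarrow> fv (rename_fm \<rho> \<phi>) = \<rho> ` fv \<phi>"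
  by (induction \<phi>) (auto simp: fvt_rename_trm inj_eq)

lemma evalt_cong: "\<forall>v \<in> fvt t. e v = e' v \<Longrightarrow> evalt S e t = evalt S e' t"
  by (induction t) (auto cong: map_cong)

lemma sat_in_cong:
  "(\<And>v. v \<in> fv \<phi> \<Longrightarrow> e v = e' v) \<Longrightarrow> sat_in U S \<phi> e \<longleftrightarrow> sat_in U S \<phi> e'"
proof (induction \<phi> arbitrary: e e')
  case (Eq s t)
  have "evalt S e s = evalt S e' s" "evalt S e t = evalt S e' t"
    by (rule evalt_cong; use Eq.prems in simp)+
  then show ?case
    by simp
next
  case (Rel r ts)
  have "map (evalt S e) ts = map (evalt S e') ts"
    by (rule map_cong[OF refl], rule evalt_cong) (use Rel.prems in auto)
  then show ?case
    by (simp only: sat_in.simps)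
next
  case (Neg \<phi>)
  have "sat_in U S \<phi> e \<longleftrightarrow> sat_in U S \<phi> e'"
    by (rule Neg.IH) (use Neg.prems in simp)
  then show ?case
    by simp
next
  case (Conj \<phi> \<psi>)
  have "sat_in U S \<phi> e \<longleftrightarrow> sat_in U S \<phi> e'" "sat_in U S \<psi> e \<longleftrightarrow> sat_in U S \<psi> e'"
    by (rule Conj.IH; use Conj.prems in simp)+
  then show ?case
    by simp
next
  case (Ex x \<phi>)
  have "sat_in U S \<phi> (e(x := a)) \<longleftrightarrow> sat_in U S \<phi> (e'(x := a))" for a
    by (rule Ex.IH) (use Ex.prems in auto)
  then show ?case
    by simp
qed

lemma finite_fvt: "finite (fvt t)"
  by (induction t) auto

lemma finite_fv: "finite (fv \<phi>)"
  by (induction \<phi>) (auto simp: finite_fvt)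

text \<open>\<open>d\<restriction>W \<equiv>\<^sub>M d'\<restriction>W\<close>; the variables outside \<open>W\<close> carry the parameters from \<open>M\<close>.\<close>
definition same_type_over ::
    "('a, 'f, 'r) struc \<Rightarrow> 'a set \<Rightarrow> nat set \<Rightarrow> (nat \<Rightarrow> 'a) \<Rightarrow> (nat \<Rightarrow> 'a) \<Rightarrow> bool" where
  "same_type_over S M W d d' \<longleftrightarrow> (\<forall>\<phi> f. (\<forall>v. v \<notin> W \<longrightarrow> f v \<in> M) \<longrightarrow>
     (sat S \<phi> (override_on f d W) \<longleftrightarrow> sat S \<phi> (override_on f d' W)))"

lemma same_type_over_sym: "same_type_over S M W d d' \<Longrightarrow> same_type_over S M W d' d"
  unfolding same_type_over_def by blast

definition type_over ::
    "('a, 'f, 'r) struc \<Rightarrow> 'a set \<Rightarrow> nat \<Rightarrow> (nat \<Rightarrow> 'a) \<Rightarrow> (('f, 'r) fm \<times> (nat \<Rightarrow> 'a)) set" where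
  "type_over S M n a = {(\<phi>, f) \<in> over M n. sat S \<phi> (override_on f a {..<n})}"

lemma realizes_iff_override_on:
  "realizes S n a p \<longleftrightarrow> (\<forall>(\<phi>, f) \<in> p. sat S \<phi> (override_on f a {..<n}))"
  unfolding realizes_def override_on_def by simp

lemma complete_type_type_over: "complete_type S M n (type_over S M n a)"
  unfolding complete_type_def
proof (intro conjI)
  show "type_over S M n a \<subseteq> over M n"
    by (auto simp: type_over_def)
  show "\<forall>(\<phi>, f) \<in> over M n. (\<phi>, f) \<in> type_over S M n a \<or> (Neg \<phi>, f) \<in> type_over S M n a"
    by (auto simp: type_over_def over_def)
  show "\<forall>F \<subseteq> type_over S M n a. finite F \<longrightarrow> (\<exists>c. realizes S n c F)"
    by (intro allI impI exI[of _ a]) (auto simp: realizes_iff_override_on type_over_def)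
qed

lemma realizes_type_over_same_type:
  assumes "realizes S n c (type_over S M n a)"
  shows "same_type_over S M {..<n} a c"
  unfolding same_type_over_def
proof (intro allI impI)
  fix \<phi> f
  assume "\<forall>v. v \<notin> {..<n} \<longrightarrow> f v \<in> M"
  then have "(\<psi>, f) \<in> type_over S M n a \<longleftrightarrow> sat S \<psi> (override_on f a {..<n})" for \<psi>
    by (simp add: type_over_def over_def)
  then have "sat S \<psi> (override_on f a {..<n}) \<Longrightarrow> sat S \<psi> (override_on f c {..<n})" for \<psi>
    using assms by (auto simp: realizes_iff_override_on)
  from this[of \<phi>] this[of "Neg \<phi>"]
  show "sat S \<phi> (override_on f a {..<n}) \<longleftrightarrow> sat S \<phi> (override_on f c {..<n})"
    by auto
qed

text \<open>Variables of \<open>{..<n} - W\<close> are moved beyond \<open>n\<close>, where the type over \<open>M\<close> of the first \<open>n\<close>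
  coordinates allows parameters from \<open>M\<close>.\<close>
lemma same_type_over_subset:
  assumes "same_type_over S M {..<n} a c" "W \<subseteq> {..<n}" "M \<noteq> {}"
  shows "same_type_over S M W a c"
  unfolding same_type_over_def
proof (intro allI impI)
  fix \<phi> f
  assume f: "\<forall>v. v \<notin> W \<longrightarrow> f v \<in> M"
  obtain m where m: "m \<in> M"
    using assms(3) by blast
  define \<tau> where "\<tau> v = (if v \<in> W then v else v + n)" for v
  define g where "g v = (if n \<le> v \<and> v - n \<notin> W then f (v - n) else m)" for v
  have "inj \<tau>"
    using assms(2) by (auto simp: inj_def \<tau>_def)
  have g: "\<forall>v. v \<notin> {..<n} \<longrightarrow> g v \<in> M"
    using f m by (simp add: g_def)
  have "override_on g b {..<n} \<circ> \<tau> = override_on f b W" for b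
    using assms(2) by (auto simp: fun_eq_iff override_on_def \<tau>_def g_def)
  then show "sat S \<phi> (override_on f a W) \<longleftrightarrow> sat S \<phi> (override_on f c W)"
    using assms(1) g sat_in_rename_fm[OF \<open>inj \<tau>\<close>, of UNIV S \<phi>]
    unfolding same_type_over_def by metis
qed

lemma full_same_type_over:
  assumes "full S M C" "finite W" "M \<noteq> {}"
  obtains c where "\<forall>v \<in> W. c v \<in> C" "same_type_over S M W a c"
proof -
  obtain n where W: "W \<subseteq> {..<n}"
    using finite_nat_bounded[OF assms(2)] by blast
  obtain c where "\<forall>i < n. c i \<in> C" "realizes S n c (type_over S M n a)"
    using assms(1) complete_type_type_over unfolding full_def by blast
  with W show thesis
    using that realizes_type_over_same_type same_type_over_subset[OF _ W assms(3)] by blast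
qed

section \<open>Finitely satisfied types are invariant over \<open>M\<close>\<close>

lemma fin_satD:
  assumes "fin_sat S M X D" "\<forall>v \<in> V. e v \<in> X" "\<forall>v \<in> fv \<phi> - V. e v \<in> D" "sat S \<phi> e"
  obtains e' where "\<forall>v \<in> V. e' v \<in> M" "\<forall>v. v \<notin> V \<longrightarrow> e' v = e v" "sat S \<phi> e'"
  using assms(1)[unfolded fin_sat_def, THEN spec[of _ \<phi>], THEN spec[of _ e], THEN spec[of _ V]] assms(2-4)
  by blast

lemma fin_satI:
  assumes "\<And>\<phi> e V. \<forall>v \<in> V. e v \<in> X \<Longrightarrow> \<forall>v \<in> fv \<phi> - V. e v \<in> D \<Longrightarrow> sat S \<phi> e \<Longrightarrow>
     \<exists>e'. (\<forall>v \<in> V. e' v \<in> M) \<and> (\<forall>v. v \<notin> V \<longrightarrow> e' v = e v) \<and> sat S \<phi> e'"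
  shows "fin_sat S M X D"
  unfolding fin_sat_def using assms by (intro allI impI)

lemma fin_sat_subset_params: "fin_sat S M X D \<Longrightarrow> D' \<subseteq> D \<Longrightarrow> fin_sat S M X D'"
  by (rule fin_satI, erule fin_satD) auto

lemma fin_sat_subset: "fin_sat S M X D \<Longrightarrow> X' \<subseteq> X \<Longrightarrow> fin_sat S M X' D"
  by (rule fin_satI, erule fin_satD) auto

text \<open>The two instances of \<open>\<phi>\<close> are combined into one formula on even and odd variables, and the
  \<open>X\<close>-part of this formula is moved into \<open>M\<close>.\<close>
lemma fin_sat_separating_pair:
  assumes fs: "fin_sat S M X D" and UW: "U \<inter> W = {}"
    and e: "\<forall>v \<in> U. e v \<in> X" "\<forall>v \<in> fv \<phi> - U - W. e v \<in> D"
    and d: "\<forall>v \<in> W. d v \<in> D" "\<forall>v \<in> W. d' v \<in> D"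
    and sat: "sat S \<phi> (override_on e d W)" "\<not> sat S \<phi> (override_on e d' W)"
  obtains g where "\<forall>v \<in> U. g v \<in> M" "\<forall>v. v \<notin> U \<longrightarrow> g v = e v"
    "sat S \<phi> (override_on g d W)" "\<not> sat S \<phi> (override_on g d' W)"
proof -
  define \<rho>\<^sub>1 where "\<rho>\<^sub>1 v = 2 * v" for v :: nat
  define \<rho>\<^sub>2 where "\<rho>\<^sub>2 v = (if v \<in> W then Suc (2 * v) else 2 * v)" for v
  have "inj \<rho>\<^sub>1"
    by (auto simp: inj_def \<rho>\<^sub>1_def)
  have "inj \<rho>\<^sub>2"
    by (rule injI) (auto simp: \<rho>\<^sub>2_def split: if_splits; presburger)
  have \<rho>\<^sub>2_notin: "\<rho>\<^sub>2 v = \<rho>\<^sub>1 v" if "v \<notin> W" for v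
    using that by (simp add: \<rho>\<^sub>1_def \<rho>\<^sub>2_def)
  have \<rho>\<^sub>2_in: "\<rho>\<^sub>2 v \<notin> \<rho>\<^sub>1 ` U" if "v \<in> W" for v
    using that by (auto simp: \<rho>\<^sub>1_def \<rho>\<^sub>2_def) presburger
  have \<rho>\<^sub>1_in: "\<rho>\<^sub>1 v \<in> \<rho>\<^sub>1 ` U \<longleftrightarrow> v \<in> U" for v
    by (rule inj_image_mem_iff[OF \<open>inj \<rho>\<^sub>1\<close>])
  define E where "E v = (if even v then override_on e d W (v div 2) else d' (v div 2))" for v
  have E_\<rho>: "E (\<rho>\<^sub>1 v) = override_on e d W v" "E (\<rho>\<^sub>2 v) = override_on e d' W v" for v
    by (simp_all add: E_def \<rho>\<^sub>1_def \<rho>\<^sub>2_def)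
  define \<chi> where "\<chi> = Conj (rename_fm \<rho>\<^sub>1 \<phi>) (Neg (rename_fm \<rho>\<^sub>2 \<phi>))"
  have sat_\<chi>: "sat S \<chi> E' \<longleftrightarrow> sat S \<phi> (E' \<circ> \<rho>\<^sub>1) \<and> \<not> sat S \<phi> (E' \<circ> \<rho>\<^sub>2)" for E'
    by (simp add: \<chi>_def sat_in_rename_fm[OF \<open>inj \<rho>\<^sub>1\<close>] sat_in_rename_fm[OF \<open>inj \<rho>\<^sub>2\<close>])
  have "sat S \<chi> E"
    using sat sat_\<chi> E_\<rho> by (simp add: comp_def)
  moreover have "\<forall>v \<in> \<rho>\<^sub>1 ` U. E v \<in> X"
    using e(1) UW E_\<rho>(1) by (auto simp: disjoint_iff)
  moreover have "\<forall>v \<in> fv \<chi> - \<rho>\<^sub>1 ` U. E v \<in> D"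
  proof
    fix v
    assume v: "v \<in> fv \<chi> - \<rho>\<^sub>1 ` U"
    have "fv \<chi> = \<rho>\<^sub>1 ` fv \<phi> \<union> \<rho>\<^sub>2 ` fv \<phi>"
      by (simp add: \<chi>_def fv_rename_fm \<open>inj \<rho>\<^sub>1\<close> \<open>inj \<rho>\<^sub>2\<close>)
    then obtain w where w: "w \<in> fv \<phi>" "v = \<rho>\<^sub>1 w \<or> v = \<rho>\<^sub>2 w"
      using v by blast
    with v UW have "w \<notin> U"
      using \<rho>\<^sub>2_notin by blast
    with w show "E v \<in> D"
      using e(2) d E_\<rho> by (cases "w \<in> W") auto
  qed
  ultimately obtain E' where E': "\<forall>v \<in> \<rho>\<^sub>1 ` U. E' v \<in> M" "\<forall>v. v \<notin> \<rho>\<^sub>1 ` U \<longrightarrow> E' v = E v"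
    "sat S \<chi> E'"
    using fin_satD[OF fs] by blast
  define g where "g = override_on (E' \<circ> \<rho>\<^sub>1) e W"
  have g_d: "override_on g d W = E' \<circ> \<rho>\<^sub>1"
  proof
    fix v
    show "override_on g d W v = (E' \<circ> \<rho>\<^sub>1) v"
      using E'(2) E_\<rho>(1)[of v] \<rho>\<^sub>1_in[of v] UW by (cases "v \<in> W") (auto simp: g_def)
  qed
  have g_d': "override_on g d' W = E' \<circ> \<rho>\<^sub>2"
  proof
    fix v
    show "override_on g d' W v = (E' \<circ> \<rho>\<^sub>2) v"
      using E'(2) E_\<rho>(2)[of v] \<rho>\<^sub>2_in[of v] \<rho>\<^sub>2_notin[of v] by (cases "v \<in> W") (auto simp: g_def)
  qed
  show thesis
  proof
    show "\<forall>v \<in> U. g v \<in> M"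
      using E'(1) UW by (auto simp: g_def disjoint_iff)
    show "\<forall>v. v \<notin> U \<longrightarrow> g v = e v"
      using E'(2) \<rho>\<^sub>1_in E_\<rho>(1) by (simp add: g_def override_on_def)
    show "sat S \<phi> (override_on g d W)" "\<not> sat S \<phi> (override_on g d' W)"
      using E'(3) sat_\<chi> g_d g_d' by simp_all
  qed
qed

lemma fin_sat_same_type_invariant:
  assumes fs: "fin_sat S M X D" and "M \<subseteq> D" "M \<noteq> {}"
    and same: "same_type_over S M W d d'" and UW: "U \<inter> W = {}"
    and e: "\<forall>v \<in> U. e v \<in> X" "\<forall>v \<in> fv \<phi> - U - W. e v \<in> M"
    and d: "\<forall>v \<in> W. d v \<in> D" "\<forall>v \<in> W. d' v \<in> D"
    and sat: "sat S \<phi> (override_on e d W)"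
  shows "sat S \<phi> (override_on e d' W)"
proof (rule ccontr)
  assume "\<not> sat S \<phi> (override_on e d' W)"
  then obtain g where g: "\<forall>v \<in> U. g v \<in> M" "\<forall>v. v \<notin> U \<longrightarrow> g v = e v"
    "sat S \<phi> (override_on g d W)" "\<not> sat S \<phi> (override_on g d' W)"
    using fin_sat_separating_pair[OF fs UW e(1) _ d sat] e(2) \<open>M \<subseteq> D\<close> by blast
  obtain m where "m \<in> M"
    using \<open>M \<noteq> {}\<close> by blast
  define f where "f v = (if v \<in> fv \<phi> - W then g v else m)" for v
  have "\<forall>v. v \<notin> W \<longrightarrow> f v \<in> M"
    using g(1,2) e(2) \<open>m \<in> M\<close> by (auto simp: f_def)
  then have "sat S \<phi> (override_on f d W) \<longleftrightarrow> sat S \<phi> (override_on f d' W)"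
    using same unfolding same_type_over_def by blast
  moreover have "sat S \<phi> (override_on f b W) \<longleftrightarrow> sat S \<phi> (override_on g b W)" for b
    by (rule sat_in_cong) (simp add: override_on_def f_def)
  ultimately show False
    using g(3,4) by simp
qed

lemma fs_seq_pair: "fs_seq S M C [X, Y] \<longleftrightarrow> fin_sat S M X C \<and> fin_sat S M Y (X \<union> C)"
  unfolding fs_seq_def by (simp add: All_less_Suc2)

lemma fs_seq_triple:
  "fs_seq S M C [X, Y, Z] \<longleftrightarrow>
     fin_sat S M X C \<and> fin_sat S M Y (X \<union> C) \<and> fin_sat S M Z (X \<union> Y \<union> C)"
  unfolding fs_seq_def by (simp add: All_less_Suc2 Un_assoc)

lemma fin_sat_add_params:
  assumes B: "fin_sat S M B (A \<union> C)" and B\<^sub>2: "fin_sat S M B\<^sub>2 (B\<^sub>1 \<union> C)"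
    and "B\<^sub>1 \<subseteq> B" "B\<^sub>2 \<subseteq> B" and full: "full S M C" and "M \<noteq> {}"
  shows "fin_sat S M B\<^sub>2 (A \<union> B\<^sub>1 \<union> C)"
proof (rule fin_satI)
  fix \<phi> e V
  assume V: "\<forall>v \<in> V. e v \<in> B\<^sub>2" and params: "\<forall>v \<in> fv \<phi> - V. e v \<in> A \<union> B\<^sub>1 \<union> C"
    and "sat S \<phi> e"
  have "M \<subseteq> A \<union> C"
    using full by (auto simp: full_def)
  define W where "W = {v \<in> fv \<phi> - V. e v \<notin> B\<^sub>1}"
  define U where "U = {v \<in> fv \<phi> - V. e v \<in> B\<^sub>1}"
  have "finite W"
    by (rule finite_subset[OF _ finite_fv]) (auto simp: W_def)
  then obtain c where c: "\<forall>v \<in> W. c v \<in> C" "same_type_over S M W e c"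
    using full_same_type_over[OF full _ \<open>M \<noteq> {}\<close>] by metis
  have "sat S \<phi> (override_on e c W)"
  proof (rule fin_sat_same_type_invariant[OF B \<open>M \<subseteq> A \<union> C\<close> \<open>M \<noteq> {}\<close> c(2), where U = "V \<union> U"])
    show "sat S \<phi> (override_on e e W)"
      using \<open>sat S \<phi> e\<close> by (simp add: override_on_def)
  qed (use V params c(1) assms(3,4) in \<open>auto simp: W_def U_def\<close>)
  moreover have "\<forall>v \<in> V. override_on e c W v \<in> B\<^sub>2" "\<forall>v \<in> fv \<phi> - V. override_on e c W v \<in> B\<^sub>1 \<union> C"
    using V params c(1) by (auto simp: W_def override_on_def)
  ultimately obtain e' where e': "\<forall>v \<in> V. e' v \<in> M" "\<forall>v. v \<notin> V \<longrightarrow> e' v = override_on e c W v"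
    and "sat S \<phi> e'"
    using fin_satD[OF B\<^sub>2] by blast
  have "override_on e' c W = e'"
    using e'(2) by (auto simp: fun_eq_iff override_on_def W_def)
  have "sat S \<phi> (override_on e' e W)"
  proof (rule fin_sat_same_type_invariant[OF B \<open>M \<subseteq> A \<union> C\<close> \<open>M \<noteq> {}\<close> same_type_over_sym[OF c(2)],
        where U = U])
    show "sat S \<phi> (override_on e' c W)"
      using \<open>sat S \<phi> e'\<close> \<open>override_on e' c W = e'\<close> by simp
  qed (use e' c(1) params assms(3) in \<open>auto simp: W_def U_def\<close>)
  moreover have "\<forall>v \<in> V. override_on e' e W v \<in> M" "\<forall>v. v \<notin> V \<longrightarrow> override_on e' e W v = e v"
    using e'(1,2) by (auto simp: W_def override_on_def)
  ultimately show "\<exists>e'. (\<forall>v \<in> V. e' v \<in> M) \<and> (\<forall>v. v \<notin> V \<longrightarrow> e' v = e v) \<and> sat S \<phi> e'"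
    by blast
qed

theorem lemma2:
  fixes S :: "('a, 'f, 'r) struc" and K :: "'k set"
    and M C A B B1 B2 :: "'a set"
  assumes "monster S K"
    and "small K M" and "elementary_sub S M"
    and "full S M C" and "small K C"
    and "small K A" and "small K B"
    and "fs_seq S M C [A, B]"
    and "B = B1 \<union> B2" and "B1 \<inter> B2 = {}"
  shows "fs_seq S M C [A, B1, B2] \<longleftrightarrow> fs_seq S M C [B1, B2]"
proof
  assume "fs_seq S M C [A, B1, B2]"
  then show "fs_seq S M C [B1, B2]"
    unfolding fs_seq_pair fs_seq_triple by (blast intro: fin_sat_subset_params)
next
  assume "fs_seq S M C [B1, B2]"
  have "M \<noteq> {}"
    using \<open>elementary_sub S M\<close> by (simp add: elementary_sub_def)
  have A: "fin_sat S M A C" and B: "fin_sat S M B (A \<union> C)"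
    using \<open>fs_seq S M C [A, B]\<close> by (simp_all add: fs_seq_pair)
  then have "fin_sat S M B1 (A \<union> C)"
    using \<open>B = B1 \<union> B2\<close> fin_sat_subset by blast
  moreover have "fin_sat S M B2 (A \<union> B1 \<union> C)"
    using fin_sat_add_params[OF B _ _ _ \<open>full S M C\<close> \<open>M \<noteq> {}\<close>] \<open>fs_seq S M C [B1, B2]\<close> \<open>B = B1 \<union> B2\<close>
    by (simp add: fs_seq_pair)
  ultimately show "fs_seq S M C [A, B1, B2]"
    using A by (simp add: fs_seq_triple)
qed

end
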